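(* Fix $k\in\mathbb{N}$, positive constants $b_0,b_1,b_2,\lambda_0,\lambda_1$ and $\mu\in(0,1)$. There exists $C>0$ depending only on $b_0,b_1,\lambda_0,\lambda_1,\mu$ (and the fixed $k$) such that the following holds. Let $T\geq10$, $\ell<r$, $a^\pm\in\mathbb{R}^k$, $g:[\ell,r]\to\mathbb{R}$ Lipschitz with $g(\ell)=g(r)=0$, and $P\subset(\ell,\ell+T^{1/2})$ finite (with $P\subset(\ell,r)$). Suppose that $r-\ell\leq b_0T$, $|P|\leq b_0T$, $|g(x)-g(y)|\leq b_1T|x-y|$ for all $x,y$, $a^\pm_j-a^\pm_{j+1}\geq\lambda_0T^{1/2}$ for $j\in\{1,\dots,k-1\}$, $a^-_k-g(\ell)\geq\lambda_1T$, $a^+_k-g(r)\geq\lambda_1T$, $a^-_1-g(\ell)\leq b_2T^2$, $a^+_1-g(r)\leq b_2T^2$. Then $\mathbb{P}_{\mathrm{free}}(\mathsf{H})\geq C^{-1}e^{-CT^{5/2}}$.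
   Context: $\mathbb{P}_{\mathrm{free}}$ denotes the law of $k$ independent Brownian bridges (diffusion parameter one) $\mathcal{L}=(\mathcal{L}_1,\dots,\mathcal{L}_k)$ on $[\ell,r]$ with $\mathcal{L}_j(\ell)=a^-_j$, $\mathcal{L}_j(r)=a^+_j$. $\mathsf{H}$ is the event that $\mathcal{L}_j(p)-\mathcal{L}_{j+1}(p)\geq\mu\lambda_0T^{1/2}$ for all $p\in P$ and $j\in\{1,\dots,k-1\}$, and $\mathcal{L}_k(p)-g(p)\geq\mu\lambda_1T$ for all $p\in P$. *)

theory Defs
  imports "HOL-Probability.Probability"
begin

definition heat_kernel :: "real \<Rightarrow> real \<Rightarrow> real" where
  "heat_kernel t y = exp (- (y\<^sup>2) / (2 * t)) / sqrt (2 * pi * t)"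

text \<open>Finite-dimensional density of a Brownian bridge (diffusion parameter one) on [l,r]
  from value a at l to value b at r, observed at the strictly increasing times ts
  (all in (l,r)); y i is the value at time ts!i.\<close>
definition bridge_fdd_density ::
  "real \<Rightarrow> real \<Rightarrow> real list \<Rightarrow> real \<Rightarrow> real \<Rightarrow> (nat \<Rightarrow> real) \<Rightarrow> real" where
  "bridge_fdd_density l r ts a b y =
     (let m = length ts;
          tt = (\<lambda>i. if i = 0 then l else if i \<le> m then ts ! (i - 1) else r);
          yy = (\<lambda>i. if i = 0 then a else if i \<le> m then y (i - 1) else b)
      in (\<Prod>i<m+1. heat_kernel (tt (i+1) - tt i) (yy (i+1) - yy i))
           / heat_kernel (r - l) (b - a))"

text \<open>Joint law of (L_j(ts!i)) for j in 1..k, i < length ts, where L_1,...,L_k are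
  independent Brownian bridges on [l,r] with L_j(l) = am j, L_j(r) = ap j.
  This is the finite-dimensional marginal of P_free.\<close>
definition free_fdd ::
  "nat \<Rightarrow> real \<Rightarrow> real \<Rightarrow> (nat \<Rightarrow> real) \<Rightarrow> (nat \<Rightarrow> real) \<Rightarrow> real list
     \<Rightarrow> (nat \<times> nat \<Rightarrow> real) measure" where
  "free_fdd k l r am ap ts =
     density (PiM ({1..k} \<times> {..<length ts}) (\<lambda>_. lborel))
       (\<lambda>x. ennreal (\<Prod>j\<in>{1..k}. bridge_fdd_density l r ts (am j) (ap j) (\<lambda>i. x (j, i))))"

text \<open>P_free(H): H only depends on the values of the curves at the finitely many points of P,
  so its probability is computed from the finite-dimensional law at the sorted points of P.\<close>
definition Pfree_H ::
  "nat \<Rightarrow> real \<Rightarrow> real \<Rightarrow> (nat \<Rightarrow> real) \<Rightarrow> (nat \<Rightarrow> real) \<Rightarrow> real set \<Rightarrow> (real \<Rightarrow> real)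
     \<Rightarrow> real \<Rightarrow> real \<Rightarrow> real \<Rightarrow> real \<Rightarrow> real" where
  "Pfree_H k l r am ap P g mu lam0 lam1 T =
     (let ts = sorted_list_of_set P; M = free_fdd k l r am ap ts
      in measure M {x \<in> space M. \<forall>i < length ts.
            (\<forall>j \<in> {1..<k}. x (j, i) - x (j+1, i) \<ge> mu * lam0 * sqrt T) \<and>
            x (k, i) - g (ts ! i) \<ge> mu * lam1 * T})"

end

theory Submission
  imports Defs
begin

(* By the Markov property the finite-dimensional density of k independent Brownian bridges
   factors into Gaussian transition kernels, one per curve and per sample time.  Confine every
   step to a window of half-width (eps / sqrt T) * sigma_i around its conditional mean, shifted
   upwards by the drift 2 b1 T sigma_i^2.  Inside these windows each curve stays within
   eps (1 + b0) sqrt T / 2 of a deterministic drifted mean path; these paths inherit the gaps of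
   the boundary data, and the one started and ending at 0 dominates every (b1 T)-Lipschitz g
   vanishing at l and r, so the windows force the event H.  Each window carries Gaussian mass at
   least c(eps) exp (-T - (2 b1 T)^2 (t_(i+1) - t_i)); as there are at most k b0 T windows and
   the sample times span at most sqrt T, the product is at least exp (-C T^(5/2)). *)

section \<open>Joint densities of Markov chains\<close>

definition chain_prev :: "(nat \<Rightarrow> real) \<Rightarrow> (nat \<times> nat \<Rightarrow> real) \<Rightarrow> nat \<Rightarrow> nat \<Rightarrow> real" where
  "chain_prev a x j i = (if i = 0 then a j else x (j, i - 1))"

definition prefix_closed :: "(nat \<times> nat) set \<Rightarrow> bool" where
  "prefix_closed J \<longleftrightarrow> (\<forall>j i. (j, Suc i) \<in> J \<longrightarrow> (j, i) \<in> J)"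

(* x (j, i) is the state of chain j after step i, and \<phi> j i p is the density of that state
   given the previous one p, which is a j for i = 0. *)
definition chain_density ::
  "(nat \<Rightarrow> nat \<Rightarrow> real \<Rightarrow> real \<Rightarrow> ennreal) \<Rightarrow> (nat \<Rightarrow> real) \<Rightarrow> (nat \<times> nat) set
     \<Rightarrow> (nat \<times> nat \<Rightarrow> real) \<Rightarrow> ennreal" where
  "chain_density \<phi> a J x = (\<Prod>(j, i)\<in>J. \<phi> j i (chain_prev a x j i) (x (j, i)))"

lemma prefix_closed_Diff_last:
  assumes "prefix_closed J" "\<forall>q\<in>J. snd q \<le> i"
  shows "prefix_closed (J - {(j, i)})"
  using assms unfolding prefix_closed_def by fastforce

lemma prefix_closed_induct [consumes 2, case_names empty remove_last]:
  assumes "finite J" "prefix_closed J"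
    and empty: "Q {}"
    and remove_last: "\<And>J j i. finite J \<Longrightarrow> prefix_closed J \<Longrightarrow> (j, i) \<in> J \<Longrightarrow> \<forall>q\<in>J. snd q \<le> i
       \<Longrightarrow> Q (J - {(j, i)}) \<Longrightarrow> Q J"
  shows "Q J"
  using assms(1,2)
proof (induction "card J" arbitrary: J rule: less_induct)
  case less
  show ?case
  proof (cases "J = {}")
    case True
    then show ?thesis using empty by simp
  next
    case False
    define i where "i = Max (snd ` J)"
    have "i \<in> snd ` J" unfolding i_def using False less.prems by simp
    then obtain j where ji: "(j, i) \<in> J" by force
    have last: "\<forall>q\<in>J. snd q \<le> i" unfolding i_def using less.prems by simp
    have "card (J - {(j, i)}) < card J" using less.prems(1) ji by (rule card_Diff1_less)
    moreover have "prefix_closed (J - {(j, i)})" using less.prems(2) last by (rule prefix_closed_Diff_last)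
    ultimately have "Q (J - {(j, i)})" using less.hyps less.prems(1) by simp
    then show ?thesis using remove_last[OF less.prems ji last] by simp
  qed
qed

lemma measurable_chain_prev:
  assumes "prefix_closed J" "(j, i) \<in> J"
  shows "(\<lambda>x. chain_prev a x j i) \<in> borel_measurable (PiM J (\<lambda>_. lborel))"
proof (cases i)
  case (Suc i')
  then have "(j, i') \<in> J" using assms unfolding prefix_closed_def by auto
  then show ?thesis using Suc by (simp add: chain_prev_def)
qed (simp add: chain_prev_def)

lemma borel_measurable_chain_density:
  assumes meas: "\<And>j i. case_prod (\<phi> j i) \<in> borel_measurable (borel \<Otimes>\<^sub>M borel)"
    and "prefix_closed J"
  shows "chain_density \<phi> a J \<in> borel_measurable (PiM J (\<lambda>_. lborel))"
  unfolding chain_density_def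
proof (rule borel_measurable_prod_ennreal, clarify)
  fix j i assume ji: "(j, i) \<in> J"
  have "(\<lambda>x. (chain_prev a x j i, x (j, i))) \<in> measurable (PiM J (\<lambda>_. lborel)) (borel \<Otimes>\<^sub>M borel)"
    using measurable_chain_prev[OF assms(2) ji] ji by measurable
  from measurable_compose[OF this meas]
  show "(\<lambda>x. \<phi> j i (chain_prev a x j i) (x (j, i))) \<in> borel_measurable (PiM J (\<lambda>_. lborel))"
    by simp
qed

lemma chain_density_fun_upd_last:
  assumes "finite J" "(j, i) \<in> J" "\<forall>q\<in>J. snd q \<le> i"
  shows "chain_density \<phi> a J (x((j, i) := y)) =
     chain_density \<phi> a (J - {(j, i)}) x * \<phi> j i (chain_prev a x j i) y"
proof -
  have "chain_density \<phi> a (J - {(j, i)}) (x((j, i) := y)) = chain_density \<phi> a (J - {(j, i)}) x"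
    unfolding chain_density_def case_prod_unfold
  proof (intro prod.cong refl)
    fix q assume q: "q \<in> J - {(j, i)}"
    then have "(fst q, snd q - 1) \<noteq> (j, i) \<or> snd q = 0" using assms(3) by force
    then have "chain_prev a (x((j, i) := y)) (fst q) (snd q) = chain_prev a x (fst q) (snd q)"
      by (auto simp: chain_prev_def)
    moreover have "(x((j, i) := y)) (fst q, snd q) = x (fst q, snd q)" using q by simp
    ultimately show "\<phi> (fst q) (snd q) (chain_prev a (x((j, i) := y)) (fst q) (snd q))
        ((x((j, i) := y)) (fst q, snd q)) = \<phi> (fst q) (snd q) (chain_prev a x (fst q) (snd q)) (x (fst q, snd q))"
      by simp
  qed
  moreover have "chain_prev a (x((j, i) := y)) j i = chain_prev a x j i"
    by (cases i) (simp_all add: chain_prev_def)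
  ultimately show ?thesis
    using assms(1,2) by (simp add: chain_density_def prod.remove mult.commute)
qed

lemma nn_integral_chain_density_remove_last:
  assumes meas: "\<And>j i. case_prod (\<phi> j i) \<in> borel_measurable (borel \<Otimes>\<^sub>M borel)"
    and J: "finite J" "prefix_closed J" and last: "(j, i) \<in> J" "\<forall>q\<in>J. snd q \<le> i"
  shows "(\<integral>\<^sup>+x. chain_density \<phi> a J x \<partial>PiM J (\<lambda>_. lborel)) =
    (\<integral>\<^sup>+x. chain_density \<phi> a (J - {(j, i)}) x * (\<integral>\<^sup>+y. \<phi> j i (chain_prev a x j i) y \<partial>lborel)
       \<partial>PiM (J - {(j, i)}) (\<lambda>_. lborel))"
proof -
  interpret product_sigma_finite "\<lambda>_. lborel" by standard
  have J_eq: "J = insert (j, i) (J - {(j, i)})" using last by blast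
  have "(\<integral>\<^sup>+x. chain_density \<phi> a J x \<partial>PiM J (\<lambda>_. lborel)) =
      (\<integral>\<^sup>+x. (\<integral>\<^sup>+y. chain_density \<phi> a J (x((j, i) := y)) \<partial>lborel) \<partial>PiM (J - {(j, i)}) (\<lambda>_. lborel))"
    using product_nn_integral_insert[of "J - {(j, i)}" "(j, i)" "chain_density \<phi> a J"]
      borel_measurable_chain_density[OF meas J(2)] J(1) J_eq by simp
  also have "\<dots> = (\<integral>\<^sup>+x. chain_density \<phi> a (J - {(j, i)}) x * (\<integral>\<^sup>+y. \<phi> j i (chain_prev a x j i) y \<partial>lborel)
       \<partial>PiM (J - {(j, i)}) (\<lambda>_. lborel))"
  proof (rule nn_integral_cong)
    fix x
    have "(\<lambda>y. (chain_prev a x j i, y)) \<in> measurable lborel (borel \<Otimes>\<^sub>M borel)" by simp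
    from measurable_compose[OF this meas]
    have "\<phi> j i (chain_prev a x j i) \<in> borel_measurable lborel" by simp
    then show "(\<integral>\<^sup>+y. chain_density \<phi> a J (x((j, i) := y)) \<partial>lborel) =
        chain_density \<phi> a (J - {(j, i)}) x * (\<integral>\<^sup>+y. \<phi> j i (chain_prev a x j i) y \<partial>lborel)"
      by (simp add: chain_density_fun_upd_last[OF J(1) last] nn_integral_cmult)
  qed
  finally show ?thesis .
qed

lemma nn_integral_chain_density_ge:
  assumes meas: "\<And>j i. case_prod (\<phi> j i) \<in> borel_measurable (borel \<Otimes>\<^sub>M borel)"
    and "finite J" "prefix_closed J"
    and lower: "\<And>j i p. (j, i) \<in> J \<Longrightarrow> c j i \<le> (\<integral>\<^sup>+y. \<phi> j i p y \<partial>lborel)"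
  shows "(\<Prod>(j, i)\<in>J. c j i) \<le> (\<integral>\<^sup>+x. chain_density \<phi> a J x \<partial>PiM J (\<lambda>_. lborel))"
  using assms(2,3) lower
proof (induction rule: prefix_closed_induct)
  case empty
  then show ?case by (simp add: chain_density_def PiM_empty)
next
  case (remove_last J j i)
  let ?J' = "J - {(j, i)}"
  have "(\<Prod>(j, i)\<in>J. c j i) = (\<Prod>(j, i)\<in>?J'. c j i) * c j i"
    using remove_last.hyps by (simp add: prod.remove mult.commute)
  also have "\<dots> \<le> (\<integral>\<^sup>+x. chain_density \<phi> a ?J' x \<partial>PiM ?J' (\<lambda>_. lborel)) * c j i"
    using remove_last.IH remove_last.prems by (intro mult_right_mono) auto
  also have "\<dots> = (\<integral>\<^sup>+x. chain_density \<phi> a ?J' x * c j i \<partial>PiM ?J' (\<lambda>_. lborel))"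
    using borel_measurable_chain_density[OF meas prefix_closed_Diff_last] remove_last.hyps
    by (simp add: nn_integral_multc)
  also have "\<dots> \<le> (\<integral>\<^sup>+x. chain_density \<phi> a ?J' x * (\<integral>\<^sup>+y. \<phi> j i (chain_prev a x j i) y \<partial>lborel)
       \<partial>PiM ?J' (\<lambda>_. lborel))"
    using remove_last.prems remove_last.hyps by (intro nn_integral_mono mult_left_mono) auto
  also have "\<dots> = (\<integral>\<^sup>+x. chain_density \<phi> a J x \<partial>PiM J (\<lambda>_. lborel))"
    using nn_integral_chain_density_remove_last[OF meas remove_last.hyps] by simp
  finally show ?case .
qed

lemma nn_integral_chain_density_le:
  assumes meas: "\<And>j i. case_prod (\<phi> j i) \<in> borel_measurable (borel \<Otimes>\<^sub>M borel)"
    and "finite J" "prefix_closed J"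
    and upper: "\<And>j i p. (j, i) \<in> J \<Longrightarrow> (\<integral>\<^sup>+y. \<phi> j i p y \<partial>lborel) \<le> c j i"
  shows "(\<integral>\<^sup>+x. chain_density \<phi> a J x \<partial>PiM J (\<lambda>_. lborel)) \<le> (\<Prod>(j, i)\<in>J. c j i)"
  using assms(2,3) upper
proof (induction rule: prefix_closed_induct)
  case empty
  then show ?case by (simp add: chain_density_def PiM_empty)
next
  case (remove_last J j i)
  let ?J' = "J - {(j, i)}"
  have "(\<integral>\<^sup>+x. chain_density \<phi> a J x \<partial>PiM J (\<lambda>_. lborel)) =
      (\<integral>\<^sup>+x. chain_density \<phi> a ?J' x * (\<integral>\<^sup>+y. \<phi> j i (chain_prev a x j i) y \<partial>lborel)
       \<partial>PiM ?J' (\<lambda>_. lborel))"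
    using nn_integral_chain_density_remove_last[OF meas remove_last.hyps] by simp
  also have "\<dots> \<le> (\<integral>\<^sup>+x. chain_density \<phi> a ?J' x * c j i \<partial>PiM ?J' (\<lambda>_. lborel))"
    using remove_last.prems remove_last.hyps by (intro nn_integral_mono mult_left_mono) auto
  also have "\<dots> = (\<integral>\<^sup>+x. chain_density \<phi> a ?J' x \<partial>PiM ?J' (\<lambda>_. lborel)) * c j i"
    using borel_measurable_chain_density[OF meas prefix_closed_Diff_last] remove_last.hyps
    by (simp add: nn_integral_multc)
  also have "\<dots> \<le> (\<Prod>(j, i)\<in>?J'. c j i) * c j i"
    using remove_last.IH remove_last.prems by (intro mult_right_mono) auto
  also have "\<dots> = (\<Prod>(j, i)\<in>J. c j i)"
    using remove_last.hyps by (simp add: prod.remove mult.commute)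
  finally show ?case .
qed

lemma measure_chain_density_ge:
  fixes W :: "nat \<Rightarrow> nat \<Rightarrow> real \<Rightarrow> real set" and c :: "nat \<Rightarrow> nat \<Rightarrow> real"
  assumes meas: "\<And>j i. case_prod (\<phi> j i) \<in> borel_measurable (borel \<Otimes>\<^sub>M borel)"
    and W_meas: "\<And>j i. Measurable.pred (borel \<Otimes>\<^sub>M borel) (\<lambda>(p, y). y \<in> W j i p)"
    and J: "finite J" "prefix_closed J"
    and sub_prob: "\<And>j i p. (j, i) \<in> J \<Longrightarrow> (\<integral>\<^sup>+y. \<phi> j i p y \<partial>lborel) \<le> 1"
    and c_nonneg: "\<And>j i. c j i \<ge> 0"
    and window: "\<And>j i p. (j, i) \<in> J \<Longrightarrow>
       ennreal (c j i) \<le> (\<integral>\<^sup>+y. \<phi> j i p y * indicator (W j i p) y \<partial>lborel)"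
    and H: "H \<in> sets (PiM J (\<lambda>_. lborel))"
    and tube: "\<And>x. x \<in> space (PiM J (\<lambda>_. lborel)) \<Longrightarrow>
       \<forall>(j, i)\<in>J. x (j, i) \<in> W j i (chain_prev a x j i) \<Longrightarrow> x \<in> H"
  shows "(\<Prod>(j, i)\<in>J. c j i) \<le> measure (density (PiM J (\<lambda>_. lborel)) (chain_density \<phi> a J)) H"
proof -
  let ?\<psi> = "\<lambda>j i p y. \<phi> j i p y * indicator (W j i p) y"
  let ?M = "density (PiM J (\<lambda>_. lborel)) (chain_density \<phi> a J)"
  have meas_\<psi>: "case_prod (?\<psi> j i) \<in> borel_measurable (borel \<Otimes>\<^sub>M borel)" for j i
  proof -
    have "(\<lambda>z. case_prod (\<phi> j i) z * indicator {(p, y). y \<in> W j i p} z) \<in> borel_measurable (borel \<Otimes>\<^sub>M borel)"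
      using W_meas[of j i] by (intro borel_measurable_times_ennreal meas borel_measurable_indicator)
        (simp add: pred_def space_pair_measure)
    moreover have "(\<lambda>z. case_prod (\<phi> j i) z * indicator {(p, y). y \<in> W j i p} z) = case_prod (?\<psi> j i)"
      by (auto simp: fun_eq_iff indicator_def)
    ultimately show ?thesis by simp
  qed
  have emeasure_eq: "emeasure ?M H = (\<integral>\<^sup>+x. chain_density \<phi> a J x * indicator H x \<partial>PiM J (\<lambda>_. lborel))"
    using borel_measurable_chain_density[OF meas J(2)] H by (rule emeasure_density)
  have "emeasure ?M H \<le> (\<integral>\<^sup>+x. chain_density \<phi> a J x \<partial>PiM J (\<lambda>_. lborel))"
    unfolding emeasure_eq by (intro nn_integral_mono) (simp add: indicator_def)
  also have "\<dots> \<le> (\<Prod>(j, i)\<in>J. 1)"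
    by (rule nn_integral_chain_density_le[OF meas J]) (rule sub_prob)
  finally have finite_H: "emeasure ?M H < \<top>" by (simp add: ennreal_one_less_top le_less_trans)
  have "chain_density ?\<psi> a J x \<le> chain_density \<phi> a J x * indicator H x"
    if x: "x \<in> space (PiM J (\<lambda>_. lborel))" for x
  proof (cases "\<forall>(j, i)\<in>J. x (j, i) \<in> W j i (chain_prev a x j i)")
    case True
    then have "chain_density ?\<psi> a J x = chain_density \<phi> a J x"
      unfolding chain_density_def by (intro prod.cong refl) auto
    then show ?thesis using tube[OF x True] by simp
  next
    case False
    then obtain j i where "(j, i) \<in> J" "x (j, i) \<notin> W j i (chain_prev a x j i)" by blast
    then have "chain_density ?\<psi> a J x = 0"
      unfolding chain_density_def using J(1) by (intro prod_zero bexI[of _ "(j, i)"]) auto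
    then show ?thesis by simp
  qed
  then have "(\<integral>\<^sup>+x. chain_density ?\<psi> a J x \<partial>PiM J (\<lambda>_. lborel)) \<le> emeasure ?M H"
    unfolding emeasure_eq by (rule nn_integral_mono)
  moreover have "(\<Prod>(j, i)\<in>J. ennreal (c j i)) \<le> (\<integral>\<^sup>+x. chain_density ?\<psi> a J x \<partial>PiM J (\<lambda>_. lborel))"
    by (rule nn_integral_chain_density_ge[OF meas_\<psi> J]) (rule window)
  moreover have "(\<Prod>(j, i)\<in>J. ennreal (c j i)) = ennreal (\<Prod>(j, i)\<in>J. c j i)"
    using c_nonneg by (simp add: case_prod_unfold prod_ennreal)
  ultimately have "ennreal (\<Prod>(j, i)\<in>J. c j i) \<le> emeasure ?M H" by simp
  with finite_H show ?thesis
    by (simp add: emeasure_eq_ennreal_measure ennreal_le_iff[symmetric] del: ennreal_le_iff)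
qed

section \<open>Transition kernels of the Brownian bridge\<close>

lemma heat_kernel_pos: "t > 0 \<Longrightarrow> heat_kernel t y > 0"
  unfolding heat_kernel_def by simp

lemma heat_kernel_product_ratio:
  fixes s u x d :: real
  assumes s: "s > 0" and u: "u > 0"
  shows "heat_kernel s x * heat_kernel u (d - x) / heat_kernel (s + u) d =
    normal_density (d * s / (s + u)) (sqrt (s * u / (s + u))) x"
proof -
  define v where "v = s + u"
  have v: "v > 0" using s u by (simp add: v_def)
  have exponent: "- x\<^sup>2 / (2 * s) + - (d - x)\<^sup>2 / (2 * u) - - d\<^sup>2 / (2 * v) =
      - (x - d * s / v)\<^sup>2 / (2 * (s * u / v))"
  proof -
    have "- x\<^sup>2 / (2 * s) + - (d - x)\<^sup>2 / (2 * u) - - d\<^sup>2 / (2 * v) =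
        (- x\<^sup>2 * u * v - (d - x)\<^sup>2 * s * v + d\<^sup>2 * s * u) / (2 * s * u * v)"
      using s u v by (simp add: field_simps)
    also have "- x\<^sup>2 * u * v - (d - x)\<^sup>2 * s * v + d\<^sup>2 * s * u = - (x * v - d * s)\<^sup>2"
      by (simp add: v_def power2_eq_square algebra_simps)
    also have "- (x * v - d * s)\<^sup>2 / (2 * s * u * v) = - (x - d * s / v)\<^sup>2 / (2 * (s * u / v))"
      using s u v by (simp add: field_simps power2_eq_square)
    finally show ?thesis .
  qed
  have variance: "sqrt (2 * pi * v) / (sqrt (2 * pi * s) * sqrt (2 * pi * u)) = 1 / sqrt (2 * pi * (s * u / v))"
  proof -
    have "2 * pi * (s * u / v) = (2 * pi * s) * (2 * pi * u) / (2 * pi * v)"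
      using v by (simp add: field_simps)
    then show ?thesis by (simp only: real_sqrt_divide real_sqrt_mult) (use v in simp)
  qed
  have "heat_kernel s x * heat_kernel u (d - x) / heat_kernel v d =
      sqrt (2 * pi * v) / (sqrt (2 * pi * s) * sqrt (2 * pi * u)) *
      (exp (- x\<^sup>2 / (2 * s)) * exp (- (d - x)\<^sup>2 / (2 * u)) / exp (- d\<^sup>2 / (2 * v)))"
    unfolding heat_kernel_def using s u v by (simp add: field_simps)
  also have "\<dots> = 1 / sqrt (2 * pi * (s * u / v)) * exp (- (x - d * s / v)\<^sup>2 / (2 * (s * u / v)))"
    unfolding variance exponent[symmetric] by (simp only: exp_add exp_diff)
  also have "\<dots> = normal_density (d * s / v) (sqrt (s * u / v)) x"
    using s u v by (simp add: normal_density_def)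
  finally show ?thesis by (simp add: v_def)
qed

definition bridge_kernel :: "real \<Rightarrow> real \<Rightarrow> real \<Rightarrow> real \<Rightarrow> real \<Rightarrow> real \<Rightarrow> real" where
  "bridge_kernel s t r b p =
     normal_density (p + (b - p) * ((t - s) / (r - s))) (sqrt ((t - s) * (r - t) / (r - s)))"

lemma bridge_kernel_eq_heat_kernel:
  assumes "s < t" "t < r"
  shows "bridge_kernel s t r b p y =
    heat_kernel (t - s) (y - p) * heat_kernel (r - t) (b - y) / heat_kernel (r - s) (b - p)"
proof -
  have "heat_kernel (t - s) (y - p) * heat_kernel (r - t) ((b - p) - (y - p)) / heat_kernel ((t - s) + (r - t)) (b - p) =
      normal_density ((b - p) * (t - s) / ((t - s) + (r - t))) (sqrt ((t - s) * (r - t) / ((t - s) + (r - t)))) (y - p)"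
    using assms by (intro heat_kernel_product_ratio) auto
  then show ?thesis
    by (simp add: bridge_kernel_def normal_density_def algebra_simps)
qed

definition bridge_time :: "real \<Rightarrow> real \<Rightarrow> real list \<Rightarrow> nat \<Rightarrow> real" where
  "bridge_time l r ts i = (if i = 0 then l else if i \<le> length ts then ts ! (i - 1) else r)"

lemma bridge_time_less_right:
  assumes "set ts \<subseteq> {l<..<r}" "l < r" "i \<le> length ts"
  shows "bridge_time l r ts i < r"
proof (cases i)
  case (Suc i')
  then have "ts ! i' \<in> {l<..<r}" using assms(3) by (intro subsetD[OF assms(1)] nth_mem) simp
  then show ?thesis using Suc assms(3) by (simp add: bridge_time_def)
qed (simp add: bridge_time_def assms(2))

lemma bridge_time_less_Suc:
  assumes "sorted_wrt (<) ts" "set ts \<subseteq> {l<..<r}" "l < r" "i \<le> length ts"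
  shows "bridge_time l r ts i < bridge_time l r ts (Suc i)"
proof (cases "i = length ts")
  case True
  then show ?thesis using bridge_time_less_right[OF assms(2-4)] by (simp add: bridge_time_def)
next
  case False
  then have "i < length ts" using assms(4) by simp
  moreover have "i > 0 \<Longrightarrow> ts ! (i - 1) < ts ! i"
    using assms(1) calculation by (intro sorted_wrt_nth_less) auto
  moreover have "ts ! i \<in> {l<..<r}" using assms(2) nth_mem[OF calculation(1)] by blast
  ultimately show ?thesis by (auto simp: bridge_time_def)
qed

lemma incseq_bridge_time:
  assumes "sorted_wrt (<) ts" "set ts \<subseteq> {l<..<r}" "l < r"
  shows "incseq (bridge_time l r ts)"
proof (rule incseq_SucI)
  fix i
  show "bridge_time l r ts i \<le> bridge_time l r ts (Suc i)"
    using bridge_time_less_Suc[OF assms, of i] by (cases "i \<le> length ts") (auto simp: bridge_time_def)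
qed

lemma bridge_time_le_right:
  assumes "set ts \<subseteq> {l<..<r}" "l < r"
  shows "bridge_time l r ts i \<le> r"
  using bridge_time_less_right[OF assms, of i] by (cases "i \<le> length ts") (auto simp: bridge_time_def)

lemma bridge_fdd_density_eq_prod_bridge_kernel:
  assumes ts: "sorted_wrt (<) ts" "set ts \<subseteq> {l<..<r}" "l < r"
  shows "bridge_fdd_density l r ts a b y =
    (\<Prod>i<length ts. bridge_kernel (bridge_time l r ts i) (bridge_time l r ts (Suc i)) r b
       (if i = 0 then a else y (i - 1)) (y i))"
proof -
  define m where "m = length ts"
  define tt where "tt = bridge_time l r ts"
  define yy where "yy i = (if i = 0 then a else if i \<le> m then y (i - 1) else b)" for i
  have tt_less_r: "i \<le> m \<Longrightarrow> tt i < r" for i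
    unfolding tt_def m_def by (rule bridge_time_less_right[OF ts(2,3)])
  have telescope: "(\<Prod>i<n. bridge_kernel (tt i) (tt (Suc i)) r b (yy i) (yy (Suc i))) =
      (\<Prod>i<n. heat_kernel (tt (Suc i) - tt i) (yy (Suc i) - yy i)) * heat_kernel (r - tt n) (b - yy n)
        / heat_kernel (r - l) (b - a)" if "n \<le> m" for n
    using that
  proof (induction n)
    case 0
    have "heat_kernel (r - l) (b - a) > 0" using ts(3) by (intro heat_kernel_pos) simp
    then show ?case by (simp add: tt_def bridge_time_def yy_def)
  next
    case (Suc n)
    have "heat_kernel (r - tt n) (b - yy n) > 0"
      using tt_less_r[of n] Suc.prems by (intro heat_kernel_pos) simp
    moreover have "bridge_kernel (tt n) (tt (Suc n)) r b (yy n) (yy (Suc n)) =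
        heat_kernel (tt (Suc n) - tt n) (yy (Suc n) - yy n) * heat_kernel (r - tt (Suc n)) (b - yy (Suc n))
        / heat_kernel (r - tt n) (b - yy n)"
      using bridge_time_less_Suc[OF ts, of n] tt_less_r[of "Suc n"] Suc.prems
      by (intro bridge_kernel_eq_heat_kernel) (auto simp: tt_def m_def)
    ultimately show ?case using Suc by (simp add: field_simps)
  qed
  have "(\<Prod>i<m. bridge_kernel (tt i) (tt (Suc i)) r b (if i = 0 then a else y (i - 1)) (y i)) =
      (\<Prod>i<m. bridge_kernel (tt i) (tt (Suc i)) r b (yy i) (yy (Suc i)))"
    by (rule prod.cong) (auto simp: yy_def)
  also have "\<dots> = (\<Prod>i<Suc m. heat_kernel (tt (Suc i) - tt i) (yy (Suc i) - yy i)) / heat_kernel (r - l) (b - a)"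
    using telescope[of m] by (simp add: tt_def bridge_time_def yy_def m_def)
  also have "\<dots> = bridge_fdd_density l r ts a b y"
    unfolding bridge_fdd_density_def Let_def tt_def yy_def bridge_time_def m_def by simp
  finally show ?thesis by (simp add: m_def tt_def)
qed

lemma free_fdd_eq_chain_density:
  assumes ts: "sorted_wrt (<) ts" "set ts \<subseteq> {l<..<r}" "l < r"
  shows "free_fdd k l r am ap ts = density (PiM ({1..k} \<times> {..<length ts}) (\<lambda>_. lborel))
    (chain_density (\<lambda>j i p y. ennreal (bridge_kernel (bridge_time l r ts i) (bridge_time l r ts (Suc i)) r (ap j) p y))
       am ({1..k} \<times> {..<length ts}))"
proof -
  have "ennreal (\<Prod>j\<in>{1..k}. bridge_fdd_density l r ts (am j) (ap j) (\<lambda>i. x (j, i))) =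
      chain_density (\<lambda>j i p y. ennreal (bridge_kernel (bridge_time l r ts i) (bridge_time l r ts (Suc i)) r (ap j) p y))
       am ({1..k} \<times> {..<length ts}) x" for x
  proof -
    have "(\<Prod>j\<in>{1..k}. bridge_fdd_density l r ts (am j) (ap j) (\<lambda>i. x (j, i))) =
        (\<Prod>(j, i)\<in>{1..k} \<times> {..<length ts}.
           bridge_kernel (bridge_time l r ts i) (bridge_time l r ts (Suc i)) r (ap j) (chain_prev am x j i) (x (j, i)))"
      by (simp add: bridge_fdd_density_eq_prod_bridge_kernel[OF ts] prod.cartesian_product chain_prev_def)
    then show ?thesis
      by (simp add: chain_density_def case_prod_unfold prod_ennreal bridge_kernel_def)
  qed
  then show ?thesis by (simp add: free_fdd_def)
qed

section \<open>Gaussian windows\<close>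

lemma nn_integral_normal_density: "\<sigma> > 0 \<Longrightarrow> (\<integral>\<^sup>+y. ennreal (normal_density \<mu> \<sigma> y) \<partial>lborel) = 1"
  using integrable_normal_density[of \<sigma>] integral_normal_density[of \<sigma>]
  by (subst nn_integral_eq_integral) auto

lemma normal_density_window_ge:
  fixes \<mu> \<sigma> w D :: real
  assumes \<sigma>: "\<sigma> > 0" and w: "w > 0" and D: "D \<ge> 0"
  shows "ennreal (2 * w / sqrt (2 * pi) * exp (- (D / \<sigma> + w)\<^sup>2 / 2)) \<le>
    (\<integral>\<^sup>+y. ennreal (normal_density \<mu> \<sigma> y) * indicator {\<mu> + D - w * \<sigma> .. \<mu> + D + w * \<sigma>} y \<partial>lborel)"
proof -
  let ?W = "{\<mu> + D - w * \<sigma> .. \<mu> + D + w * \<sigma>}"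
  define v where "v = 1 / sqrt (2 * pi * \<sigma>\<^sup>2) * exp (- (D + w * \<sigma>)\<^sup>2 / (2 * \<sigma>\<^sup>2))"
  have v_le: "ennreal v * indicator ?W y \<le> ennreal (normal_density \<mu> \<sigma> y) * indicator ?W y" for y
  proof (cases "y \<in> ?W")
    case True
    then have "\<bar>y - \<mu>\<bar> \<le> D + w * \<sigma>" using D mult_pos_pos[OF w \<sigma>] by (auto simp: abs_le_iff)
    then have "(y - \<mu>)\<^sup>2 \<le> (D + w * \<sigma>)\<^sup>2"
      using power_mono[of "\<bar>y - \<mu>\<bar>" "D + w * \<sigma>" 2] by simp
    then have "(y - \<mu>)\<^sup>2 / (2 * \<sigma>\<^sup>2) \<le> (D + w * \<sigma>)\<^sup>2 / (2 * \<sigma>\<^sup>2)"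
      by (intro divide_right_mono) auto
    then have "v \<le> normal_density \<mu> \<sigma> y"
      unfolding v_def normal_density_def by (intro mult_left_mono) auto
    then show ?thesis using True by (simp add: ennreal_leI)
  qed simp
  have "v * (2 * w * \<sigma>) = 2 * w / sqrt (2 * pi) * exp (- (D / \<sigma> + w)\<^sup>2 / 2)"
  proof -
    have "(D + w * \<sigma>)\<^sup>2 / (2 * \<sigma>\<^sup>2) = (D / \<sigma> + w)\<^sup>2 / 2"
      using \<sigma> by (simp add: field_simps power2_eq_square)
    moreover have "sqrt (2 * pi * \<sigma>\<^sup>2) = sqrt (2 * pi) * \<sigma>"
      using \<sigma> by (simp add: real_sqrt_mult)
    ultimately show ?thesis
      unfolding v_def minus_divide_left[symmetric] using \<sigma> by (simp add: field_simps)
  qed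
  then have "ennreal (2 * w / sqrt (2 * pi) * exp (- (D / \<sigma> + w)\<^sup>2 / 2)) = ennreal v * ennreal (2 * w * \<sigma>)"
    using \<sigma> w by (simp add: v_def ennreal_mult'[symmetric])
  also have "\<dots> = (\<integral>\<^sup>+y. ennreal v * indicator ?W y \<partial>lborel)"
    using \<sigma> w by (subst nn_integral_cmult_indicator) (auto simp: algebra_simps)
  also have "\<dots> \<le> (\<integral>\<^sup>+y. ennreal (normal_density \<mu> \<sigma> y) * indicator ?W y \<partial>lborel)"
    by (intro nn_integral_mono v_le)
  finally show ?thesis .
qed

lemma drifted_window_mass_ge:
  fixes eps T S X s Lc \<mu> :: real
  assumes eps: "eps > 0" and T: "T \<ge> 1" and S: "S \<ge> 0" and X: "0 < X" "X \<le> s"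
    and Lc: "exp (- Lc) \<le> 2 * eps * exp (- eps\<^sup>2) / sqrt (2 * pi)"
  shows "ennreal (exp (- (Lc + T) - S\<^sup>2 * s)) \<le>
    (\<integral>\<^sup>+y. ennreal (normal_density \<mu> (sqrt X) y) *
       indicator {\<mu> + S * X - eps / sqrt T * sqrt X .. \<mu> + S * X + eps / sqrt T * sqrt X} y \<partial>lborel)"
proof -
  define w where "w = eps / sqrt T"
  define \<sigma> where "\<sigma> = sqrt X"
  have \<sigma>: "\<sigma> > 0" using X by (simp add: \<sigma>_def)
  have w: "w > 0" using eps T by (simp add: w_def)
  have drift: "S * X / \<sigma> = S * \<sigma>"
    using real_div_sqrt[of X] X unfolding \<sigma>_def by (metis less_imp_le times_divide_eq_right)
  have w2: "w\<^sup>2 \<le> eps\<^sup>2"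
    using T eps by (simp add: w_def power_divide divide_le_eq mult_le_cancel_left1)
  have "(S * \<sigma> + w)\<^sup>2 \<le> 2 * (S * \<sigma>)\<^sup>2 + 2 * w\<^sup>2"
    using zero_le_power2[of "S * \<sigma> - w"] unfolding power2_sum power2_diff by linarith
  moreover have "(S * \<sigma>)\<^sup>2 \<le> S\<^sup>2 * s"
    using X by (simp add: \<sigma>_def power_mult_distrib mult_left_mono)
  ultimately have exp_S: "exp (- S\<^sup>2 * s - eps\<^sup>2) \<le> exp (- (S * \<sigma> + w)\<^sup>2 / 2)"
    using w2 by simp
  \<comment> \<open>the factor exp (- T) pays for the narrow window width w = eps / sqrt T\<close>
  have exp_T: "exp (- T) \<le> 1 / sqrt T"
  proof -
    have "sqrt T \<le> T" using T by (simp add: real_sqrt_le_iff' power2_eq_square mult_le_cancel_left1)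
    also have "T \<le> exp T" using exp_ge_add_one_self[of T] by linarith
    finally show ?thesis using T by (simp add: exp_minus field_simps)
  qed
  have "exp (- (Lc + T) - S\<^sup>2 * s) = exp (- Lc) * exp (- T) * exp (- S\<^sup>2 * s - eps\<^sup>2) * exp (eps\<^sup>2)"
    by (simp add: exp_add[symmetric] exp_diff[symmetric])
  also have "\<dots> \<le> 2 * eps * exp (- eps\<^sup>2) / sqrt (2 * pi) * (1 / sqrt T) * exp (- (S * \<sigma> + w)\<^sup>2 / 2) * exp (eps\<^sup>2)"
    using eps T by (intro mult_right_mono mult_mono Lc exp_T exp_S) auto
  also have "\<dots> = 2 * w / sqrt (2 * pi) * exp (- (S * X / \<sigma> + w)\<^sup>2 / 2)"
    unfolding drift w_def by (simp add: exp_minus field_simps)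
  finally have "ennreal (exp (- (Lc + T) - S\<^sup>2 * s)) \<le> ennreal (2 * w / sqrt (2 * pi) * exp (- (S * X / \<sigma> + w)\<^sup>2 / 2))"
    by (rule ennreal_leI)
  also have "\<dots> \<le> (\<integral>\<^sup>+y. ennreal (normal_density \<mu> \<sigma> y) * indicator {\<mu> + S * X - w * \<sigma> .. \<mu> + S * X + w * \<sigma>} y \<partial>lborel)"
    using \<sigma> w S X by (intro normal_density_window_ge) auto
  finally show ?thesis by (simp add: w_def \<sigma>_def)
qed

section \<open>Drifted mean paths\<close>

primrec drift_path :: "(nat \<Rightarrow> real) \<Rightarrow> (nat \<Rightarrow> real) \<Rightarrow> real \<Rightarrow> real \<Rightarrow> nat \<Rightarrow> real" where
  "drift_path \<rho> D a b 0 = a"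
| "drift_path \<rho> D a b (Suc i) = drift_path \<rho> D a b i + (b - drift_path \<rho> D a b i) * \<rho> i + D i"

lemma drift_path_gap:
  assumes \<rho>: "\<And>i. 0 \<le> \<rho> i \<and> \<rho> i \<le> 1" and "a1 - a2 \<ge> G" "b1 - b2 \<ge> G"
  shows "drift_path \<rho> D a1 b1 n - drift_path \<rho> D a2 b2 n \<ge> G"
proof (induction n)
  case (Suc n)
  define d where "d = drift_path \<rho> D a1 b1 n - drift_path \<rho> D a2 b2 n"
  have "drift_path \<rho> D a1 b1 (Suc n) - drift_path \<rho> D a2 b2 (Suc n) = d * (1 - \<rho> n) + (b1 - b2) * \<rho> n"
    by (simp add: d_def algebra_simps)
  moreover have "d * (1 - \<rho> n) \<ge> G * (1 - \<rho> n)"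
    using Suc \<rho>[of n] by (intro mult_right_mono) (auto simp: d_def)
  moreover have "(b1 - b2) * \<rho> n \<ge> G * \<rho> n"
    using assms \<rho>[of n] by (intro mult_right_mono) auto
  ultimately show ?case by (simp add: algebra_simps)
qed (use assms in simp)

lemma drift_path_deviation:
  assumes \<rho>: "\<And>i. 0 \<le> \<rho> i \<and> \<rho> i \<le> 1" and "v 0 = a"
    and step: "\<And>i. i < n \<Longrightarrow> \<bar>v (Suc i) - (v i + (b - v i) * \<rho> i) - D i\<bar> \<le> h i"
  shows "\<bar>v n - drift_path \<rho> D a b n\<bar> \<le> (\<Sum>i<n. h i)"
  using step
proof (induction n)
  case (Suc n)
  define d where "d = v n - drift_path \<rho> D a b n"
  have "v (Suc n) - drift_path \<rho> D a b (Suc n) = (v (Suc n) - (v n + (b - v n) * \<rho> n) - D n) + d * (1 - \<rho> n)"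
    by (simp add: d_def algebra_simps)
  moreover have "\<bar>d * (1 - \<rho> n)\<bar> \<le> \<bar>d\<bar>" using \<rho>[of n] by (simp add: abs_mult mult_left_le)
  moreover have "\<bar>d\<bar> \<le> (\<Sum>i<n. h i)" using Suc by (simp add: d_def)
  moreover have "\<bar>v (Suc n) - (v n + (b - v n) * \<rho> n) - D n\<bar> \<le> h n" using Suc.prems by simp
  ultimately show ?case by simp
qed (use assms in simp)

lemma drift_path_ge_tent:
  fixes tt :: "nat \<Rightarrow> real"
  assumes tt: "incseq tt" "tt n < r" and S: "S \<ge> 0"
    and \<rho>: "\<And>i. \<rho> i = (tt (Suc i) - tt i) / (r - tt i)"
    and D: "\<And>i. D i = S * ((tt (Suc i) - tt i) * (r - tt (Suc i)) / (r - tt i))"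
  shows "S * (r - tt n) * (tt n - tt 0) / (r - tt 0) \<le> drift_path \<rho> D 0 0 n"
  using tt(2)
proof (induction n)
  case (Suc n)
  define s where "s = tt (Suc n) - tt n"
  define u where "u = r - tt (Suc n)"
  define V where "V = r - tt n"
  define L where "L = r - tt 0"
  have s: "s \<ge> 0" and u: "u > 0" using Suc.prems incseq_SucD[OF tt(1)] by (auto simp: s_def u_def)
  have V: "V = s + u" "V > 0" using s u by (auto simp: s_def u_def V_def)
  have "tt 0 \<le> tt n" using incseqD[OF tt(1)] by simp
  then have L: "V \<le> L" "L > 0" using V by (auto simp: V_def L_def)
  have IH: "S * V * (tt n - tt 0) / L \<le> drift_path \<rho> D 0 0 n"
    using Suc V by (simp add: V_def L_def)
  have step: "drift_path \<rho> D 0 0 (Suc n) = drift_path \<rho> D 0 0 n * (u / V) + S * (s * u / V)"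
  proof -
    have "\<rho> n = s / V" "D n = S * (s * u / V)" by (simp_all add: \<rho> D s_def u_def V_def)
    then have "drift_path \<rho> D 0 0 (Suc n) = drift_path \<rho> D 0 0 n * (1 - s / V) + S * (s * u / V)"
      by (simp add: algebra_simps)
    moreover have "1 - s / V = u / V" using V by (simp add: field_simps)
    ultimately show ?thesis by simp
  qed
  have "S * V * (tt n - tt 0) / L * (u / V) \<le> drift_path \<rho> D 0 0 n * (u / V)"
    using IH u V by (intro mult_right_mono) auto
  moreover have "S * (s * u / L) \<le> S * (s * u / V)"
    using s u L V S by (intro mult_left_mono divide_left_mono) auto
  moreover have "S * V * (tt n - tt 0) / L * (u / V) + S * (s * u / L) = S * u * ((tt n - tt 0) + s) / L"
    using V(2) L(2) by (simp add: field_simps)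
  moreover have "(tt n - tt 0) + s = tt (Suc n) - tt 0" by (simp add: s_def)
  ultimately show ?case unfolding step by (simp add: u_def L_def)
qed simp

lemma lipschitz_vanishing_ends_le_tent:
  fixes g :: "real \<Rightarrow> real"
  assumes "g l = 0" "g r = 0" and lip: "\<forall>x\<in>{l..r}. \<forall>y\<in>{l..r}. \<bar>g x - g y\<bar> \<le> K * \<bar>x - y\<bar>"
    and K: "K \<ge> 0" and lr: "l < r" and t: "l \<le> t" "t \<le> r"
  shows "g t \<le> 2 * K * (r - t) * (t - l) / (r - l)"
proof -
  have left: "g t \<le> K * (t - l)" and right: "g t \<le> K * (r - t)"
    using lip[rule_format, of t l] lip[rule_format, of t r] assms by auto
  have harmonic: "2 * K * (r - t) * (t - l) / (r - l) = K * (t - l) + K * (t - l) * ((r - t) - (t - l)) / (r - l)"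
    "2 * K * (r - t) * (t - l) / (r - l) = K * (r - t) + K * (r - t) * ((t - l) - (r - t)) / (r - l)"
    using lr by (simp_all add: field_simps)
  show ?thesis
  proof (cases "t - l \<le> r - t")
    case True
    then have "0 \<le> K * (t - l) * ((r - t) - (t - l)) / (r - l)"
      using K lr t by (intro divide_nonneg_pos mult_nonneg_nonneg) auto
    then show ?thesis using left harmonic(1) by linarith
  next
    case False
    then have "0 \<le> K * (r - t) * ((t - l) - (r - t)) / (r - l)"
      using K lr t by (intro divide_nonneg_pos mult_nonneg_nonneg) auto
    then show ?thesis using right harmonic(2) by linarith
  qed
qed

lemma lipschitz_le_drift_path:
  fixes tt :: "nat \<Rightarrow> real" and g :: "real \<Rightarrow> real"
  assumes tt: "incseq tt" "tt 0 = l" "tt n < r" and K: "K \<ge> 0"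
    and g: "g l = 0" "g r = 0" "\<forall>x\<in>{l..r}. \<forall>y\<in>{l..r}. \<bar>g x - g y\<bar> \<le> K * \<bar>x - y\<bar>"
    and \<rho>: "\<And>i. \<rho> i = (tt (Suc i) - tt i) / (r - tt i)"
    and D: "\<And>i. D i = 2 * K * ((tt (Suc i) - tt i) * (r - tt (Suc i)) / (r - tt i))"
  shows "g (tt n) \<le> drift_path \<rho> D 0 0 n"
proof -
  have "l \<le> tt n" using incseqD[OF tt(1), of 0 n] tt(2) by simp
  then have "g (tt n) \<le> 2 * K * (r - tt n) * (tt n - l) / (r - l)"
    using tt(3) K by (intro lipschitz_vanishing_ends_le_tent[OF g]) auto
  also have "\<dots> \<le> drift_path \<rho> D 0 0 n"
    using drift_path_ge_tent[where tt = tt and S = "2 * K" and \<rho> = \<rho> and D = D, OF tt(1,3) _ \<rho> D] K tt(2) by simp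
  finally show ?thesis .
qed

lemma sum_sqrt_le_half_sum:
  fixes m :: nat
  assumes "\<And>i. i < m \<Longrightarrow> 0 \<le> X i \<and> X i \<le> s i"
  shows "(\<Sum>i<m. sqrt (X i)) \<le> ((\<Sum>i<m. s i) + real m) / 2"
proof -
  have "sqrt (X i) \<le> (s i + 1) / 2" if "i < m" for i
  proof -
    have "0 \<le> (sqrt (X i) - 1)\<^sup>2" by simp
    then show ?thesis using assms[OF that] unfolding power2_diff by simp
  qed
  then have "(\<Sum>i<m. sqrt (X i)) \<le> (\<Sum>i<m. (s i + 1) / 2)" by (intro sum_mono) auto
  also have "\<dots> = ((\<Sum>i<m. s i) + real m) / 2" by (simp add: sum.distrib sum_divide_distrib[symmetric])
  finally show ?thesis .
qed

lemma sum_window_halfwidths_le: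
  fixes m :: nat and eps T b0 :: real
  assumes T: "T \<ge> 1" and b0: "b0 \<ge> 0" and eps: "eps > 0"
    and X: "\<And>i. i < m \<Longrightarrow> 0 \<le> X i \<and> X i \<le> s i"
    and sum_s: "(\<Sum>i<m. s i) \<le> sqrt T" and m: "real m \<le> b0 * T"
  shows "(\<Sum>i<m. eps / sqrt T * sqrt (X i)) \<le> eps * (1 + b0) * sqrt T / 2"
proof -
  have "(\<Sum>i<m. eps / sqrt T * sqrt (X i)) = eps / sqrt T * (\<Sum>i<m. sqrt (X i))"
    by (simp add: sum_distrib_left)
  also have "\<dots> \<le> eps / sqrt T * ((sqrt T + b0 * T) / 2)"
  proof (rule mult_left_mono)
    have "(\<Sum>i<m. sqrt (X i)) \<le> ((\<Sum>i<m. s i) + real m) / 2"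
      by (rule sum_sqrt_le_half_sum) (rule X)
    then show "(\<Sum>i<m. sqrt (X i)) \<le> (sqrt T + b0 * T) / 2" using sum_s m by simp
  qed (use eps T in simp)
  also have "\<dots> = eps * (1 + b0 * sqrt T) / 2"
  proof -
    have "sqrt T * sqrt T = T" using T by simp
    then show ?thesis using T by (simp add: field_simps)
  qed
  also have "\<dots> \<le> eps * (1 + b0) * sqrt T / 2"
    using T b0 eps by (simp add: algebra_simps)
  finally show ?thesis .
qed

lemma prod_window_costs_ge:
  fixes k m :: nat and T Lc b0 S :: real
  assumes T: "T \<ge> 1" and Lc: "Lc \<ge> 0" and m: "real m \<le> b0 * T" and sum_s: "(\<Sum>i<m. s i) \<le> sqrt T"
  shows "exp (- (real k * (b0 * T * (Lc + T) + S\<^sup>2 * sqrt T))) \<le>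
    (\<Prod>(j, i)\<in>{1..k} \<times> {..<m}. exp (- (Lc + T) - S\<^sup>2 * s i))"
proof -
  have "(\<Prod>(j, i)\<in>{1..k} \<times> {..<m}. exp (- (Lc + T) - S\<^sup>2 * s i)) =
      exp (\<Sum>(j, i)\<in>{1..k} \<times> {..<m}. - (Lc + T) - S\<^sup>2 * s i)"
    by (simp add: exp_sum case_prod_unfold)
  also have "(\<Sum>(j, i)\<in>{1..k} \<times> {..<m}. - (Lc + T) - S\<^sup>2 * s i) =
      (\<Sum>j\<in>{1..k}. \<Sum>i<m. - (Lc + T) - S\<^sup>2 * s i)"
    by (rule sum.cartesian_product[symmetric])
  also have "\<dots> = real k * (\<Sum>i<m. - (Lc + T) - S\<^sup>2 * s i)" by simp
  also have "(\<Sum>i<m. - (Lc + T) - S\<^sup>2 * s i) = - (real m * (Lc + T) + S\<^sup>2 * (\<Sum>i<m. s i))"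
    by (simp add: sum.distrib sum_subtractf sum_distrib_left sum_distrib_right algebra_simps)
  finally have "(\<Prod>(j, i)\<in>{1..k} \<times> {..<m}. exp (- (Lc + T) - S\<^sup>2 * s i)) =
      exp (- (real k * (real m * (Lc + T) + S\<^sup>2 * (\<Sum>i<m. s i))))"
    by (simp add: algebra_simps)
  moreover have "real m * (Lc + T) + S\<^sup>2 * (\<Sum>i<m. s i) \<le> b0 * T * (Lc + T) + S\<^sup>2 * sqrt T"
    using m sum_s Lc T by (intro add_mono mult_right_mono mult_left_mono) auto
  ultimately show ?thesis by (simp add: mult_left_mono)
qed

lemma window_budget_le_gaps:
  fixes T b0 eps mu lam0 lam1 :: real
  assumes T: "T \<ge> 1" and b0: "b0 \<ge> 0" and eps: "eps > 0"
    and lam: "eps * (1 + b0) \<le> (1 - mu) * lam0" "eps * (1 + b0) \<le> (1 - mu) * lam1"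
  shows "eps * (1 + b0) * sqrt T \<le> (1 - mu) * (lam0 * sqrt T)"
    "eps * (1 + b0) * sqrt T / 2 \<le> (1 - mu) * (lam1 * T)"
proof -
  show "eps * (1 + b0) * sqrt T \<le> (1 - mu) * (lam0 * sqrt T)"
    using mult_right_mono[OF lam(1), of "sqrt T"] T by (simp add: mult.assoc)
  have "eps * (1 + b0) * sqrt T \<le> (1 - mu) * lam1 * sqrt T"
    by (rule mult_right_mono[OF lam(2)]) (use T in simp)
  also have "\<dots> \<le> (1 - mu) * lam1 * T"
  proof (rule mult_left_mono)
    show "sqrt T \<le> T" using T by (simp add: real_sqrt_le_iff' power2_eq_square mult_le_cancel_left1)
    show "0 \<le> (1 - mu) * lam1" using eps b0 lam(2) by (smt (verit) mult_pos_pos)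
  qed
  finally have "eps * (1 + b0) * sqrt T \<le> (1 - mu) * (lam1 * T)" by (simp add: mult.assoc)
  moreover have "0 \<le> eps * (1 + b0) * sqrt T" using eps b0 T by simp
  ultimately show "eps * (1 + b0) * sqrt T / 2 \<le> (1 - mu) * (lam1 * T)" by linarith
qed

lemma separated_near_drift_paths:
  fixes k :: nat and am ap :: "nat \<Rightarrow> real" and x :: "nat \<times> nat \<Rightarrow> real" and E G0 G1 mu f :: real
  assumes \<rho>: "\<And>i. 0 \<le> \<rho> i \<and> \<rho> i \<le> 1" and "k \<ge> 1"
    and gaps: "\<forall>j\<in>{1..<k}. am j - am (j+1) \<ge> G0 \<and> ap j - ap (j+1) \<ge> G0"
    and lowest: "am k \<ge> G1" "ap k \<ge> G1"
    and near: "\<And>j. j \<in> {1..k} \<Longrightarrow> \<bar>x (j, i) - drift_path \<rho> D (am j) (ap j) n\<bar> \<le> E"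
    and floor: "f \<le> drift_path \<rho> D 0 0 n"
    and E: "2 * E \<le> (1 - mu) * G0" "E \<le> (1 - mu) * G1"
  shows "(\<forall>j\<in>{1..<k}. x (j, i) - x (j+1, i) \<ge> mu * G0) \<and> x (k, i) - f \<ge> mu * G1"
proof (intro conjI ballI)
  fix j assume j: "j \<in> {1..<k}"
  have "drift_path \<rho> D (am j) (ap j) n - drift_path \<rho> D (am (j+1)) (ap (j+1)) n \<ge> G0"
    using gaps j by (intro drift_path_gap[OF \<rho>]) auto
  moreover have "\<bar>x (j, i) - drift_path \<rho> D (am j) (ap j) n\<bar> \<le> E"
    "\<bar>x (j+1, i) - drift_path \<rho> D (am (j+1)) (ap (j+1)) n\<bar> \<le> E"
    using near j by auto
  ultimately show "x (j, i) - x (j+1, i) \<ge> mu * G0" using E(1) by (simp add: abs_le_iff algebra_simps)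
next
  have "drift_path \<rho> D (am k) (ap k) n - drift_path \<rho> D 0 0 n \<ge> G1"
    using lowest by (intro drift_path_gap[OF \<rho>]) auto
  moreover have "\<bar>x (k, i) - drift_path \<rho> D (am k) (ap k) n\<bar> \<le> E" using near assms(2) by auto
  ultimately show "x (k, i) - f \<ge> mu * G1" using floor E(2) by (simp add: abs_le_iff algebra_simps)
qed

lemma separated_of_windows:
  fixes k m :: nat and am ap f h :: "nat \<Rightarrow> real" and x :: "nat \<times> nat \<Rightarrow> real" and E G0 G1 mu :: real
  assumes \<rho>: "\<And>i. 0 \<le> \<rho> i \<and> \<rho> i \<le> 1" and k: "k \<ge> 1"
    and gaps: "\<forall>j\<in>{1..<k}. am j - am (j+1) \<ge> G0 \<and> ap j - ap (j+1) \<ge> G0"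
    and lowest: "am k \<ge> G1" "ap k \<ge> G1"
    and window: "\<And>j i. j \<in> {1..k} \<Longrightarrow> i < m \<Longrightarrow>
       \<bar>x (j, i) - (chain_prev am x j i + (ap j - chain_prev am x j i) * \<rho> i) - D i\<bar> \<le> h i"
    and h: "\<And>i. i < m \<Longrightarrow> h i \<ge> 0" "(\<Sum>i<m. h i) \<le> E"
    and floor: "\<And>i. i < m \<Longrightarrow> f i \<le> drift_path \<rho> D 0 0 (Suc i)"
    and E: "2 * E \<le> (1 - mu) * G0" "E \<le> (1 - mu) * G1"
    and i: "i < m"
  shows "(\<forall>j\<in>{1..<k}. x (j, i) - x (j+1, i) \<ge> mu * G0) \<and> x (k, i) - f i \<ge> mu * G1"
proof (rule separated_near_drift_paths[OF \<rho> k gaps lowest _ floor[OF i] E])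
  fix j assume j: "j \<in> {1..k}"
  have "\<bar>chain_prev am x j (Suc i) - drift_path \<rho> D (am j) (ap j) (Suc i)\<bar> \<le> (\<Sum>l<Suc i. h l)"
    by (rule drift_path_deviation[OF \<rho>]) (use window j i in \<open>auto simp: chain_prev_def\<close>)
  also have "\<dots> \<le> (\<Sum>l<m. h l)" using h(1) i by (intro sum_mono2) auto
  finally show "\<bar>x (j, i) - drift_path \<rho> D (am j) (ap j) (Suc i)\<bar> \<le> E"
    using h(2) by (simp add: chain_prev_def)
qed

lemma separation_event_sets:
  fixes k m :: nat and f :: "nat \<Rightarrow> real" and c0 c1 :: real
  assumes "k \<ge> 1"
  shows "{x \<in> space (PiM ({1..k} \<times> {..<m}) (\<lambda>_. lborel)). \<forall>i<m.
      (\<forall>j\<in>{1..<k}. x (j, i) - x (j+1, i) \<ge> c0) \<and> x (k, i) - f i \<ge> c1}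
    \<in> sets (PiM ({1..k} \<times> {..<m}) (\<lambda>_. lborel))"
proof -
  let ?M = "PiM ({1..k} \<times> {..<m}) (\<lambda>_. lborel)"
  have "Measurable.pred ?M (\<lambda>x. \<forall>i\<in>{..<m}.
      (\<forall>j\<in>{1..<k}. x (j, i) - x (j+1, i) \<ge> c0) \<and> x (k, i) - f i \<ge> c1)"
  proof (rule pred_intros_countable_bounded(3), rule pred_intros_logic(3))
    fix i assume i: "i \<in> {..<m}"
    show "Measurable.pred ?M (\<lambda>x. \<forall>j\<in>{1..<k}. x (j, i) - x (j+1, i) \<ge> c0)"
    proof (rule pred_intros_countable_bounded(3))
      fix j assume "j \<in> {1..<k}"
      then have "(j, i) \<in> {1..k} \<times> {..<m}" "(j+1, i) \<in> {1..k} \<times> {..<m}" using i by auto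
      then show "Measurable.pred ?M (\<lambda>x. x (j, i) - x (j+1, i) \<ge> c0)" by measurable
    qed
    have "(k, i) \<in> {1..k} \<times> {..<m}" using i assms by auto
    then show "Measurable.pred ?M (\<lambda>x. x (k, i) - f i \<ge> c1)" by measurable
  qed
  then show ?thesis unfolding pred_def by (simp only: Ball_def lessThan_iff)
qed

lemma Pfree_H_ge_exp:
  fixes k :: nat and b0 b1 mu lam0 lam1 T l r eps Lc :: real and am ap :: "nat \<Rightarrow> real"
    and g :: "real \<Rightarrow> real" and P :: "real set"
  assumes k: "k \<ge> 1" and b0: "b0 \<ge> 0" and b1: "b1 \<ge> 0" and T: "T \<ge> 1" and lr: "l < r"
    and eps: "eps > 0" "eps * (1 + b0) \<le> (1 - mu) * lam0" "eps * (1 + b0) \<le> (1 - mu) * lam1"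
    and Lc: "Lc \<ge> 0" "exp (- Lc) \<le> 2 * eps * exp (- eps\<^sup>2) / sqrt (2 * pi)"
    and g: "g l = 0" "g r = 0" "\<forall>x\<in>{l..r}. \<forall>y\<in>{l..r}. \<bar>g x - g y\<bar> \<le> b1 * T * \<bar>x - y\<bar>"
    and P: "finite P" "P \<subseteq> {l<..<l + sqrt T}" "P \<subseteq> {l<..<r}" "real (card P) \<le> b0 * T"
    and gaps: "\<forall>j\<in>{1..<k}. am j - am (j+1) \<ge> lam0 * sqrt T \<and> ap j - ap (j+1) \<ge> lam0 * sqrt T"
    and lowest: "am k - g l \<ge> lam1 * T" "ap k - g r \<ge> lam1 * T"
  shows "exp (- (real k * (b0 * T * (Lc + T) + (2 * b1 * T)\<^sup>2 * sqrt T))) \<le> Pfree_H k l r am ap P g mu lam0 lam1 T"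
proof -
  define ts where "ts = sorted_list_of_set P"
  define m where "m = length ts"
  define I where "I = {1..k} \<times> {..<m}"
  define tt where "tt = bridge_time l r ts"
  define s where "s i = tt (Suc i) - tt i" for i
  define X where "X i = s i * (r - tt (Suc i)) / (r - tt i)" for i
  define \<rho> where "\<rho> i = s i / (r - tt i)" for i
  define S where "S = 2 * b1 * T"
  define D where "D i = S * X i" for i
  define h where "h i = eps / sqrt T * sqrt (X i)" for i
  define W where "W j i p = {p + (ap j - p) * \<rho> i + D i - h i .. p + (ap j - p) * \<rho> i + D i + h i}" for j i p
  define \<phi> where "\<phi> j i p y = ennreal (bridge_kernel (tt i) (tt (Suc i)) r (ap j) p y)" for j i p y
  define c where "c (j :: nat) i = exp (- (Lc + T) - S\<^sup>2 * s i)" for j i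
  define H where "H = {x \<in> space (PiM I (\<lambda>_. lborel)). \<forall>i<m.
     (\<forall>j\<in>{1..<k}. x (j, i) - x (j+1, i) \<ge> mu * lam0 * sqrt T) \<and> x (k, i) - g (ts ! i) \<ge> mu * lam1 * T}"
  have ts: "sorted_wrt (<) ts" "set ts \<subseteq> {l<..<r}" "set ts = P" using P by (auto simp: ts_def)
  have tt: "incseq tt" "\<And>i. i \<le> m \<Longrightarrow> tt i < tt (Suc i)" "\<And>i. i \<le> m \<Longrightarrow> tt i < r" "\<And>i. tt i \<le> r"
    unfolding tt_def m_def using incseq_bridge_time[OF ts(1,2) lr] bridge_time_less_Suc[OF ts(1,2) lr]
      bridge_time_less_right[OF ts(2) lr] bridge_time_le_right[OF ts(2) lr] by auto
  have tt_points: "tt (Suc i) = ts ! i" "ts ! i \<in> P" if "i < m" for i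
    using that ts(3) by (auto simp: tt_def bridge_time_def m_def)
  have X: "0 < X i" "X i \<le> s i" if "i < m" for i
    using tt(2)[of i] tt(3)[of "Suc i"] tt(3)[of i] that
    by (auto simp: X_def s_def divide_le_eq mult_le_cancel_left1)
  have \<rho>: "0 \<le> \<rho> i \<and> \<rho> i \<le> 1" for i
    using incseq_SucD[OF tt(1), of i] tt(4)[of "Suc i"] by (auto simp: \<rho>_def s_def divide_le_eq_1)
  have sum_s: "(\<Sum>i<m. s i) \<le> sqrt T"
  proof -
    have "(\<Sum>i<m. s i) = tt m - tt 0" unfolding s_def by (rule sum_lessThan_telescope)
    moreover have "tt m - tt 0 \<le> sqrt T"
      using tt_points[of "m - 1"] P(2) T by (cases m) (auto simp: tt_def bridge_time_def)
    ultimately show ?thesis by simp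
  qed
  have m: "real m \<le> b0 * T" using P(4) ts(3) by (simp add: m_def ts_def)
  have tt0: "tt 0 = l" by (simp add: tt_def bridge_time_def)
  have \<rho>_eq: "\<rho> i = (tt (Suc i) - tt i) / (r - tt i)" for i by (simp add: \<rho>_def s_def)
  have D_eq: "D i = 2 * (b1 * T) * ((tt (Suc i) - tt i) * (r - tt (Suc i)) / (r - tt i))" for i
    by (simp add: D_def S_def X_def s_def)
  have Pfree: "Pfree_H k l r am ap P g mu lam0 lam1 T = measure (density (PiM I (\<lambda>_. lborel)) (chain_density \<phi> am I)) H"
    by (simp add: Pfree_H_def free_fdd_eq_chain_density[OF ts(1,2) lr] H_def I_def m_def \<phi>_def[abs_def] tt_def ts_def[symmetric])
  have "(\<Prod>(j, i)\<in>I. c j i) \<le> measure (density (PiM I (\<lambda>_. lborel)) (chain_density \<phi> am I)) H"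
  proof (rule measure_chain_density_ge)
    show "case_prod (\<phi> j i) \<in> borel_measurable (borel \<Otimes>\<^sub>M borel)" for j i
      unfolding \<phi>_def bridge_kernel_def normal_density_def by measurable
    show "Measurable.pred (borel \<Otimes>\<^sub>M borel) (\<lambda>(p, y). y \<in> W j i p)" for j i
      unfolding W_def atLeastAtMost_iff case_prod_unfold by measurable
    show "finite I" "prefix_closed I" by (auto simp: I_def prefix_closed_def)
    show "c j i \<ge> 0" for j i by (simp add: c_def)
    show "(\<integral>\<^sup>+y. \<phi> j i p y \<partial>lborel) \<le> 1" if "(j, i) \<in> I" for j i p
      using X(1)[of i] that by (simp add: I_def \<phi>_def bridge_kernel_def nn_integral_normal_density X_def s_def)
    show "ennreal (c j i) \<le> (\<integral>\<^sup>+y. \<phi> j i p y * indicator (W j i p) y \<partial>lborel)" if "(j, i) \<in> I" for j i p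
      using drifted_window_mass_ge[OF eps(1) T _ X[of i] Lc(2), of S "p + (ap j - p) * \<rho> i"] that b1 T
      by (simp add: I_def c_def S_def \<phi>_def W_def D_def h_def bridge_kernel_def X_def s_def \<rho>_def)
    show "H \<in> sets (PiM I (\<lambda>_. lborel))"
      unfolding H_def I_def by (rule separation_event_sets[OF k])
    show "x \<in> H" if x: "x \<in> space (PiM I (\<lambda>_. lborel))"
      and windows: "\<forall>(j, i)\<in>I. x (j, i) \<in> W j i (chain_prev am x j i)" for x
    proof -
      define E where "E = eps * (1 + b0) * sqrt T / 2"
      have floor: "g (ts ! i) \<le> drift_path \<rho> D 0 0 (Suc i)" if "i < m" for i
        using lipschitz_le_drift_path[where K = "b1 * T" and \<rho> = \<rho> and D = D and g = g,
          OF tt(1) tt0 tt(3)[of "Suc i"] _ g \<rho>_eq D_eq] that b1 T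
        by (simp add: tt_points(1)[OF that])
      have halfwidths: "(\<Sum>i<m. h i) \<le> E"
        using sum_window_halfwidths_le[OF T b0 eps(1) _ sum_s m, of X] X unfolding h_def E_def
        by (simp add: less_imp_le)
      have E: "2 * E \<le> (1 - mu) * (lam0 * sqrt T)" "E \<le> (1 - mu) * (lam1 * T)"
        unfolding E_def using window_budget_le_gaps[OF T b0 eps] by simp_all
      have "(\<forall>j\<in>{1..<k}. x (j, i) - x (j+1, i) \<ge> mu * (lam0 * sqrt T)) \<and> x (k, i) - g (ts ! i) \<ge> mu * (lam1 * T)"
        if "i < m" for i
      proof (rule separated_of_windows[OF \<rho> k gaps _ _ _ _ halfwidths floor E that])
        show "am k \<ge> lam1 * T" "ap k \<ge> lam1 * T" using lowest g by auto
        show "h i \<ge> 0" if "i < m" for i using eps T X(1)[OF that] by (simp add: h_def)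
        show "\<bar>x (j, i) - (chain_prev am x j i + (ap j - chain_prev am x j i) * \<rho> i) - D i\<bar> \<le> h i"
          if "j \<in> {1..k}" "i < m" for j i
        proof -
          have "x (j, i) \<in> W j i (chain_prev am x j i)" using windows that by (auto simp: I_def)
          then show ?thesis unfolding W_def atLeastAtMost_iff abs_le_iff by linarith
        qed
      qed
      then show ?thesis using x by (simp add: H_def mult.assoc)
    qed
  qed
  moreover have "exp (- (real k * (b0 * T * (Lc + T) + (2 * b1 * T)\<^sup>2 * sqrt T))) \<le> (\<Prod>(j, i)\<in>I. c j i)"
    using prod_window_costs_ge[OF T Lc(1) m sum_s, of k S] by (simp add: S_def c_def I_def)
  ultimately show ?thesis unfolding Pfree by linarith
qed

lemma exp_T_powr_le:
  fixes k :: nat and T b0 b1 Lc C :: real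
  assumes T: "T \<ge> 1" and b0: "b0 \<ge> 0" and Lc: "Lc \<ge> 0"
    and C: "C \<ge> 1" "real k * (b0 * Lc + b0 + 4 * b1\<^sup>2) \<le> C"
  shows "inverse C * exp (- C * T powr (5/2)) \<le> exp (- (real k * (b0 * T * (Lc + T) + (2 * b1 * T)\<^sup>2 * sqrt T)))"
proof -
  have powr: "T powr (5/2) = T\<^sup>2 * sqrt T"
    using T by (simp add: powr_add[of T 2 "1/2", simplified] powr_half_sqrt)
  have "T\<^sup>2 \<le> T\<^sup>2 * sqrt T" using T by (simp add: mult_le_cancel_left1)
  moreover have "T \<le> T\<^sup>2" using T by (simp add: power2_eq_square)
  ultimately have "b0 * Lc * T + b0 * T\<^sup>2 \<le> b0 * Lc * (T\<^sup>2 * sqrt T) + b0 * (T\<^sup>2 * sqrt T)"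
    using b0 Lc by (intro add_mono mult_left_mono) auto
  then have "b0 * T * (Lc + T) + (2 * b1 * T)\<^sup>2 * sqrt T \<le> (b0 * Lc + b0 + 4 * b1\<^sup>2) * T powr (5/2)"
    unfolding powr by (simp add: power2_eq_square algebra_simps)
  then have "real k * (b0 * T * (Lc + T) + (2 * b1 * T)\<^sup>2 * sqrt T) \<le> real k * ((b0 * Lc + b0 + 4 * b1\<^sup>2) * T powr (5/2))"
    by (rule mult_left_mono) simp
  also have "\<dots> \<le> C * T powr (5/2)"
    unfolding mult.assoc[symmetric] using C(2) by (rule mult_right_mono) simp
  finally have "exp (- C * T powr (5/2)) \<le> exp (- (real k * (b0 * T * (Lc + T) + (2 * b1 * T)\<^sup>2 * sqrt T)))"
    by simp
  moreover have "inverse C * exp (- C * T powr (5/2)) \<le> exp (- C * T powr (5/2))"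
    using C(1) by (intro mult_left_le_one_le) (auto simp: inverse_le_1_iff)
  ultimately show ?thesis by linarith
qed

theorem mainTheorem3:
  fixes k :: nat and b0 b1 lam0 lam1 mu :: real
  assumes "k \<ge> 1" and "b0 > 0" and "b1 > 0" and "lam0 > 0" and "lam1 > 0"
    and "0 < mu" and "mu < 1"
  shows "\<exists>C > 0. \<forall>(b2::real) (T::real) (l::real) (r::real) (am::nat \<Rightarrow> real) (ap::nat \<Rightarrow> real)
           (g::real \<Rightarrow> real) (P::real set).
     b2 > 0 \<longrightarrow> T \<ge> 10 \<longrightarrow> l < r \<longrightarrow>
     g l = 0 \<longrightarrow> g r = 0 \<longrightarrow>
     finite P \<longrightarrow> P \<subseteq> {l<..<l + sqrt T} \<longrightarrow> P \<subseteq> {l<..<r} \<longrightarrow>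
     r - l \<le> b0 * T \<longrightarrow> real (card P) \<le> b0 * T \<longrightarrow>
     (\<forall>x\<in>{l..r}. \<forall>y\<in>{l..r}. \<bar>g x - g y\<bar> \<le> b1 * T * \<bar>x - y\<bar>) \<longrightarrow>
     (\<forall>j\<in>{1..<k}. am j - am (j+1) \<ge> lam0 * sqrt T \<and> ap j - ap (j+1) \<ge> lam0 * sqrt T) \<longrightarrow>
     am k - g l \<ge> lam1 * T \<longrightarrow> ap k - g r \<ge> lam1 * T \<longrightarrow>
     am 1 - g l \<le> b2 * T\<^sup>2 \<longrightarrow> ap 1 - g r \<le> b2 * T\<^sup>2 \<longrightarrow>
     Pfree_H k l r am ap P g mu lam0 lam1 T \<ge> inverse C * exp (- C * T powr (5/2))"
proof -
  define eps where "eps = (1 - mu) * min lam0 lam1 / (1 + b0)"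
  define Lc where "Lc = \<bar>ln (2 * eps * exp (- eps\<^sup>2) / sqrt (2 * pi))\<bar>"
  define C where "C = max 1 (real k * (b0 * Lc + b0 + 4 * b1\<^sup>2))"
  have eps: "eps > 0" "eps * (1 + b0) \<le> (1 - mu) * lam0" "eps * (1 + b0) \<le> (1 - mu) * lam1"
    using assms by (auto simp: eps_def)
  have "exp (- Lc) \<le> exp (ln (2 * eps * exp (- eps\<^sup>2) / sqrt (2 * pi)))"
    unfolding Lc_def by simp
  then have Lc: "Lc \<ge> 0" "exp (- Lc) \<le> 2 * eps * exp (- eps\<^sup>2) / sqrt (2 * pi)"
    using eps(1) by (simp_all add: Lc_def)
  show ?thesis
  proof (intro exI[of _ C] conjI allI impI)
    show "C > 0" by (simp add: C_def)
    fix b2 T l r :: real and am ap :: "nat \<Rightarrow> real" and g :: "real \<Rightarrow> real" and P :: "real set"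
    assume h: "b2 > 0" "T \<ge> 10" "l < r" "g l = 0" "g r = 0" "finite P" "P \<subseteq> {l<..<l + sqrt T}"
      "P \<subseteq> {l<..<r}" "r - l \<le> b0 * T" "real (card P) \<le> b0 * T"
      "\<forall>x\<in>{l..r}. \<forall>y\<in>{l..r}. \<bar>g x - g y\<bar> \<le> b1 * T * \<bar>x - y\<bar>"
      "\<forall>j\<in>{1..<k}. am j - am (j+1) \<ge> lam0 * sqrt T \<and> ap j - ap (j+1) \<ge> lam0 * sqrt T"
      "am k - g l \<ge> lam1 * T" "ap k - g r \<ge> lam1 * T"
    have T: "T \<ge> 1" using h(2) by simp
    have "inverse C * exp (- C * T powr (5/2)) \<le> exp (- (real k * (b0 * T * (Lc + T) + (2 * b1 * T)\<^sup>2 * sqrt T)))"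
      using assms(2) by (intro exp_T_powr_le[OF T _ Lc(1)]) (auto simp: C_def)
    moreover have "exp (- (real k * (b0 * T * (Lc + T) + (2 * b1 * T)\<^sup>2 * sqrt T))) \<le> Pfree_H k l r am ap P g mu lam0 lam1 T"
      using assms(2,3) by (intro Pfree_H_ge_exp[OF assms(1) _ _ T h(3) eps Lc h(4,5,11) h(6,7,8,10) h(12,13,14)]) auto
    ultimately show "Pfree_H k l r am ap P g mu lam0 lam1 T \<ge> inverse C * exp (- C * T powr (5/2))"
      by linarith
  qed
qed

end
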